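(* Let $k\ge 2$ be an integer, $1/2<q<1$. Let $y^*$ be a point with all coordinates strictly positive at which $P$ attains its maximum over $\Delta_k$, and suppose $y^*\neq(1/k,\dots,1/k)$, so that (as shown previously) its coordinates take exactly two values $a<1-q<b$. Then exactly one coordinate of $y^*$ equals $b$ (and the remaining $k-1$ coordinates equal $a$).
   Context: $\Delta_k=\{y\in\mathbb R^k: y_i\ge 0,\ \sum_i y_i=1\}$. For $y\in\Delta_k$, $P(y)=\sum_{i=1}^k y_i^q\prod_{j\ne i}(1-y_j)^q$. *)

theory Defs
  imports Complex_Main
begin

text \<open>Points of R^k are functions nat => real; only the coordinates 0..k-1 matter.\<close>

definition simplex :: "nat \<Rightarrow> (nat \<Rightarrow> real) set" where
  "simplex k = {y. (\<forall>i<k. 0 \<le> y i) \<and> (\<Sum>i<k. y i) = 1}"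

definition P :: "nat \<Rightarrow> real \<Rightarrow> (nat \<Rightarrow> real) \<Rightarrow> real" where
  "P k q y = (\<Sum>i<k. y i powr q * (\<Prod>j\<in>{..<k} - {i}. (1 - y j) powr q))"

end

theory Submission
  imports Defs
begin

text \<open>Moving mass t from coordinate j to coordinate i of an interior point y changes P, up to a
positive factor, into G(t) = (1-u-t)^q (1-v+t)^q (C + R(u+t) + R(v-t)), where u = y i, v = y j,
R(s) = (s/(1-s))^q and C is the sum of R over the other coordinates. At an interior maximiser G
has a local maximum at 0. For a pair of coordinates with values b and a, the first-order
condition G'(0) = 0 expresses q times the sum of all R(y l) through W(s) = (1-s) R'(s). If two
coordinates both had the value b, G would be even, and its second-order condition would read
W'(b) (1-b) + W(b) <= q times that sum. The two conditions are incompatible because W is strictly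
convex on (0,1): its logarithmic derivative is increasing.\<close>

lemma (in comm_monoid_set) remove_pair:
  assumes "finite A" "i \<in> A" "j \<in> A" "i \<noteq> j"
  shows "F g A = g i \<^bold>* g j \<^bold>* F g (A - {i, j})"
  using assms by (simp add: remove[of A i] remove[of "A - {i}" j] insert_commute
      Diff_insert2[symmetric] assoc)

lemma local_max_imp_factor_deriv_nonpos:
  fixes G A M :: "real \<Rightarrow> real"
  assumes d: "0 < d" and max: "\<And>t. \<bar>t\<bar> < d \<Longrightarrow> G t \<le> G 0"
    and G': "\<And>t. \<bar>t\<bar> < d \<Longrightarrow> (G has_real_derivative A t * M t) (at t)"
    and A: "\<And>t. \<bar>t\<bar> < d \<Longrightarrow> 0 < A t"
    and M: "M 0 = 0" "(M has_real_derivative c) (at 0)"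
  shows "c \<le> 0"
proof (rule ccontr)
  assume "\<not> c \<le> 0"
  then obtain d' where d': "d' > 0" "\<And>h. 0 < h \<Longrightarrow> h < d' \<Longrightarrow> M 0 < M h"
    using DERIV_pos_inc_right[OF M(2)] by force
  define t where "t = min d d' / 2"
  have t: "0 < t" "t < d" "t < d'" using d d' unfolding t_def by auto
  obtain s where s: "0 < s" "s < t" "G t - G 0 = (t - 0) * (A s * M s)"
    using MVT2[OF t(1), of G "\<lambda>s. A s * M s"] G' t by force
  have "0 < (t - 0) * (A s * M s)" using A[of s] d'(2)[of s] M(1) s t by simp
  with s(3) max[of t] t show False by simp
qed

lemma secant_less_deriv:
  fixes f f' :: "real \<Rightarrow> real"
  assumes "a < b" and f': "\<And>x. a \<le> x \<Longrightarrow> x \<le> b \<Longrightarrow> (f has_real_derivative f' x) (at x)"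
    and mono: "\<And>x. a < x \<Longrightarrow> x < b \<Longrightarrow> f' x < f' b"
  shows "f b - f a < (b - a) * f' b"
proof -
  obtain x where "a < x" "x < b" "f b - f a = (b - a) * f' x"
    using MVT2[OF \<open>a < b\<close> f'] by blast
  with mono[of x] \<open>a < b\<close> show ?thesis by simp
qed

definition odds :: "real \<Rightarrow> real \<Rightarrow> real" where
  "odds q t = t powr q / (1 - t) powr q"

definition odds_weight :: "real \<Rightarrow> real \<Rightarrow> real" where
  "odds_weight q t = q * t powr (q - 1) / (1 - t) powr q"

definition odds_weight' :: "real \<Rightarrow> real \<Rightarrow> real" where
  "odds_weight' q t = odds_weight q t * ((q - 1) / t + q / (1 - t))"

lemma powr_diff_one: "0 < x \<Longrightarrow> x powr (q - 1) = x powr q / (x::real)"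
  by (simp add: powr_diff)

lemma has_real_derivative_odds:
  "0 < t \<Longrightarrow> t < 1 \<Longrightarrow> (odds q has_real_derivative odds_weight q t / (1 - t)) (at t)"
  unfolding odds_def[abs_def] odds_weight_def
  by (auto intro!: derivative_eq_intros simp: powr_diff_one field_simps power2_eq_square)

lemma has_real_derivative_odds_weight:
  assumes "0 < t" "t < 1"
  shows "(odds_weight q has_real_derivative odds_weight' q t) (at t)"
proof -
  have powr_diff_two: "t powr (q - 2) = t powr q / t\<^sup>2"
    using assms by (simp add: powr_diff)
  show ?thesis
    unfolding odds_weight_def[abs_def] odds_weight'_def using assms
    by (auto intro!: derivative_eq_intros
        simp: powr_diff_one powr_diff_two field_simps power2_eq_square)
qed

lemma odds_weight_pos: "0 < q \<Longrightarrow> 0 < t \<Longrightarrow> t < 1 \<Longrightarrow> 0 < odds_weight q t"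
  by (simp add: odds_weight_def)

lemma odds_weight'_strict_mono:
  assumes q: "0 < q" "q < 1" and "0 < s" "s < t" "t < 1"
  shows "odds_weight' q s < odds_weight' q t"
proof (rule DERIV_pos_imp_increasing[OF \<open>s < t\<close>])
  fix x assume "s \<le> x" "x \<le> t"
  with assms have x: "0 < x" "x < 1" by auto
  define L where "L = (q - 1) / x + q / (1 - x)"
  define L' where "L' = (1 - q) / x\<^sup>2 + q / (1 - x)\<^sup>2"
  have "((\<lambda>x. (q - 1) / x + q / (1 - x)) has_real_derivative L') (at x)"
    unfolding L'_def using x by (auto intro!: derivative_eq_intros simp: field_simps power2_eq_square)
  then have "(odds_weight' q has_real_derivative odds_weight q x * (L\<^sup>2 + L')) (at x)"
    unfolding odds_weight'_def[abs_def]
    by (rule DERIV_cong[OF DERIV_mult[OF has_real_derivative_odds_weight[OF x]]])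
      (simp only: odds_weight'_def L_def[symmetric], simp add: power2_eq_square algebra_simps)
  moreover have "0 < odds_weight q x * (L\<^sup>2 + L')"
    using odds_weight_pos[OF q(1) x] q x unfolding L'_def
    by (intro mult_pos_pos add_nonneg_pos add_pos_pos) auto
  ultimately show "\<exists>y. (odds_weight' q has_real_derivative y) (at x) \<and> 0 < y" by blast
qed

lemma odds_weight_secant_less:
  assumes "0 < q" "q < 1" "0 < a" "a < b" "b < 1"
  shows "odds_weight q b - odds_weight q a < (b - a) * odds_weight' q b"
  using assms by (intro secant_less_deriv has_real_derivative_odds_weight odds_weight'_strict_mono) auto

definition transfer_profile :: "real \<Rightarrow> real \<Rightarrow> real \<Rightarrow> real \<Rightarrow> real \<Rightarrow> real" where
  "transfer_profile q u v C t =
     (1 - (u + t)) powr q * (1 - (v - t)) powr q * (C + odds q (u + t) + odds q (v - t))"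

definition transfer_slope :: "real \<Rightarrow> real \<Rightarrow> real \<Rightarrow> real \<Rightarrow> real \<Rightarrow> real" where
  "transfer_slope q u v C t =
     q * (1 / (1 - (v - t)) - 1 / (1 - (u + t))) * (C + odds q (u + t) + odds q (v - t))
     + odds_weight q (u + t) / (1 - (u + t)) - odds_weight q (v - t) / (1 - (v - t))"

lemma has_real_derivative_transfer_profile:
  assumes "0 < u + t" "u + t < 1" "0 < v - t" "v - t < 1"
  shows "(transfer_profile q u v C has_real_derivative
          (1 - (u + t)) powr q * (1 - (v - t)) powr q * transfer_slope q u v C t) (at t)"
  unfolding transfer_profile_def[abs_def] using assms
  by (auto intro!: derivative_eq_intros DERIV_chain2[OF has_real_derivative_odds]
      simp: transfer_slope_def powr_diff_one divide_inverse algebra_simps)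

lemma has_real_derivative_transfer_slope_at_0:
  assumes "0 < b" "b < 1"
  shows "(transfer_slope q b b C has_real_derivative
          2 * (odds_weight' q b * (1 - b) + odds_weight q b - q * (C + 2 * odds q b)) / (1 - b)\<^sup>2)
         (at 0)"
proof -
  obtain c where c: "b = 1 - c" "0 < c" "c < 1"
    using assms by (intro that[of "1 - b"]) auto
  show ?thesis
    unfolding transfer_slope_def[abs_def] c(1) using c(2,3)
    by (auto intro!: derivative_eq_intros DERIV_chain2[OF has_real_derivative_odds]
        DERIV_chain2[OF has_real_derivative_odds_weight] simp: field_simps power2_eq_square)
qed

lemma P_eq_prod_mult_sum_odds:
  assumes "\<forall>l<k. z l < 1"
  shows "P k q z = (\<Prod>l<k. (1 - z l) powr q) * (\<Sum>l<k. odds q (z l))"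
  unfolding P_def sum_distrib_left
proof (rule sum.cong[OF refl])
  fix i assume i: "i \<in> {..<k}"
  have "(\<Prod>l<k. (1 - z l) powr q) = (1 - z i) powr q * (\<Prod>l\<in>{..<k} - {i}. (1 - z l) powr q)"
    using i by (simp add: prod.remove)
  moreover have "0 < (1 - z i) powr q" using assms i by auto
  ultimately show "z i powr q * (\<Prod>j\<in>{..<k} - {i}. (1 - z j) powr q)
      = (\<Prod>l<k. (1 - z l) powr q) * odds q (z i)"
    unfolding odds_def by simp
qed

lemma simplex_transfer:
  assumes "y \<in> simplex k" "i < k" "j < k" "i \<noteq> j" "0 \<le> y i + t" "0 \<le> y j - t"
  shows "y(i := y i + t, j := y j - t) \<in> simplex k"
proof -
  let ?z = "y(i := y i + t, j := y j - t)"
  have "(\<Sum>l<k. ?z l) = ?z i + ?z j + (\<Sum>l\<in>{..<k} - {i, j}. ?z l)"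
    using assms(2-4) by (simp add: sum.remove_pair)
  also have "\<dots> = (\<Sum>l<k. y l)"
    using assms(2-4) by (simp add: sum.remove_pair[of "{..<k}" i j y])
  finally show ?thesis using assms unfolding simplex_def by auto
qed

lemma P_transfer:
  assumes "i < k" "j < k" "i \<noteq> j" "\<forall>l<k. y l < 1" "y i + t < 1" "y j - t < 1"
  shows "P k q (y(i := y i + t, j := y j - t)) =
    (\<Prod>l\<in>{..<k} - {i, j}. (1 - y l) powr q) *
    transfer_profile q (y i) (y j) (\<Sum>l\<in>{..<k} - {i, j}. odds q (y l)) t"
proof -
  let ?z = "y(i := y i + t, j := y j - t)"
  have "\<forall>l<k. ?z l < 1" using assms by auto
  then have "P k q ?z = (\<Prod>l<k. (1 - ?z l) powr q) * (\<Sum>l<k. odds q (?z l))"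
    by (rule P_eq_prod_mult_sum_odds)
  also have "\<dots> = transfer_profile q (y i) (y j) (\<Sum>l\<in>{..<k} - {i, j}. odds q (y l)) t
      * (\<Prod>l\<in>{..<k} - {i, j}. (1 - y l) powr q)"
    using assms(1-3) by (simp add: prod.remove_pair sum.remove_pair transfer_profile_def algebra_simps)
  finally show ?thesis by simp
qed

lemma first_order_condition_violates_second_order:
  assumes q: "0 < q" "q < 1" and ab: "0 < a" "a < b" "b < 1"
    and first_order: "q * (1 / (1 - a) - 1 / (1 - b)) * S
      + odds_weight q b / (1 - b) - odds_weight q a / (1 - a) = 0"
  shows "q * S < odds_weight' q b * (1 - b) + odds_weight q b"
proof -
  have clear_denominators: "x * y * (q * (1 / x - 1 / y) * S + odds_weight q b / y - odds_weight q a / x)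
      = q * (y - x) * S + odds_weight q b * x - odds_weight q a * y" if "x \<noteq> 0" "y \<noteq> 0" for x y
    using that by (simp add: field_simps)
  have "q * ((1 - b) - (1 - a)) * S + odds_weight q b * (1 - a) - odds_weight q a * (1 - b)
      = (1 - a) * (1 - b) * (q * (1 / (1 - a) - 1 / (1 - b)) * S
        + odds_weight q b / (1 - b) - odds_weight q a / (1 - a))"
    using ab by (intro clear_denominators[symmetric]) auto
  also have "\<dots> = 0" by (simp add: first_order)
  finally have "q * (b - a) * S = odds_weight q b * (1 - a) - odds_weight q a * (1 - b)"
    by (simp add: algebra_simps)
  then have "(b - a) * (odds_weight' q b * (1 - b) + odds_weight q b - q * S)
      = (1 - b) * ((b - a) * odds_weight' q b - (odds_weight q b - odds_weight q a))"
    by (simp add: algebra_simps)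
  also have "\<dots> > 0"
    using odds_weight_secant_less[OF q ab] ab by simp
  finally show ?thesis using ab by (simp add: zero_less_mult_iff)
qed

locale interior_maximizer =
  fixes k :: nat and q :: real and y :: "nat \<Rightarrow> real"
  assumes two_le_k: "2 \<le> k" and q: "0 < q" "q < 1"
    and in_simplex: "y \<in> simplex k" and pos: "\<forall>l<k. 0 < y l"
    and maximal: "\<forall>z\<in>simplex k. P k q z \<le> P k q y"
begin

lemma coord_less_one:
  assumes "l < k" shows "y l < 1"
proof -
  define m :: nat where "m = (if l = 0 then 1 else 0)"
  have m: "m < k" "m \<noteq> l" using two_le_k unfolding m_def by auto
  have "y l + y m + (\<Sum>n\<in>{..<k} - {l, m}. y n) = 1"
    using in_simplex assms m by (simp add: simplex_def sum.remove_pair[symmetric])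
  moreover have "0 \<le> (\<Sum>n\<in>{..<k} - {l, m}. y n)" using pos by (intro sum_nonneg) auto
  ultimately show ?thesis using pos m by force
qed

lemma transfer_profile_local_max:
  assumes "i < k" "j < k" "i \<noteq> j"
  defines "C \<equiv> \<Sum>l\<in>{..<k} - {i, j}. odds q (y l)"
  shows "\<exists>d>0. \<forall>t. \<bar>t\<bar> < d \<longrightarrow>
    transfer_profile q (y i) (y j) C t \<le> transfer_profile q (y i) (y j) C 0"
proof (intro exI conjI allI impI)
  define K where "K = (\<Prod>l\<in>{..<k} - {i, j}. (1 - y l) powr q)"
  have "0 < K" unfolding K_def by (intro prod_pos) (auto dest!: coord_less_one)
  have P_y: "P k q y = K * transfer_profile q (y i) (y j) C 0"
    using P_transfer[of i k j y 0 q] assms coord_less_one unfolding K_def C_def by simp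
  show "0 < min (min (y i) (1 - y i)) (min (y j) (1 - y j))"
    using pos coord_less_one assms by simp
  fix t assume "\<bar>t\<bar> < min (min (y i) (1 - y i)) (min (y j) (1 - y j))"
  then have t: "0 \<le> y i + t" "y i + t < 1" "0 \<le> y j - t" "y j - t < 1" by auto
  have "K * transfer_profile q (y i) (y j) C t = P k q (y(i := y i + t, j := y j - t))"
    using P_transfer[of i k j y t q] assms coord_less_one t unfolding K_def C_def by simp
  also have "\<dots> \<le> P k q y"
    using maximal simplex_transfer[OF in_simplex assms(1-3) t(1,3)] by blast
  finally show "transfer_profile q (y i) (y j) C t \<le> transfer_profile q (y i) (y j) C 0"
    using P_y \<open>0 < K\<close> by simp
qed

lemma first_order_condition:
  assumes "i < k" "j < k" "i \<noteq> j"
  shows "q * (1 / (1 - y j) - 1 / (1 - y i)) * (\<Sum>l<k. odds q (y l))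
    + odds_weight q (y i) / (1 - y i) - odds_weight q (y j) / (1 - y j) = 0"
proof -
  define C where "C = (\<Sum>l\<in>{..<k} - {i, j}. odds q (y l))"
  obtain d where "0 < d" and max: "\<forall>t. \<bar>0 - t\<bar> < d \<longrightarrow>
      transfer_profile q (y i) (y j) C t \<le> transfer_profile q (y i) (y j) C 0"
    using transfer_profile_local_max[OF assms] unfolding C_def by auto
  have "(transfer_profile q (y i) (y j) C has_real_derivative
      (1 - y i) powr q * (1 - y j) powr q * transfer_slope q (y i) (y j) C 0) (at 0)"
    using has_real_derivative_transfer_profile[of "y i" 0 "y j" q C] pos coord_less_one assms by simp
  from DERIV_local_max[OF this \<open>0 < d\<close> max]
  have "transfer_slope q (y i) (y j) C 0 = 0" using coord_less_one assms by force
  moreover have "(\<Sum>l<k. odds q (y l)) = C + odds q (y i) + odds q (y j)"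
    using assms unfolding C_def by (simp add: sum.remove_pair)
  ultimately show ?thesis unfolding transfer_slope_def by simp
qed

lemma second_order_condition:
  assumes "i < k" "j < k" "i \<noteq> j" "y i = y j"
  shows "odds_weight' q (y i) * (1 - y i) + odds_weight q (y i) \<le> q * (\<Sum>l<k. odds q (y l))"
proof -
  define b where "b = y i"
  define C where "C = (\<Sum>l\<in>{..<k} - {i, j}. odds q (y l))"
  have b: "0 < b" "b < 1" unfolding b_def using pos coord_less_one assms by auto
  obtain d where "0 < d" and max: "\<forall>t. \<bar>t\<bar> < d \<longrightarrow>
      transfer_profile q b b C t \<le> transfer_profile q b b C 0"
    using transfer_profile_local_max[OF assms(1-3)] assms(4) unfolding C_def b_def by auto
  define d' where "d' = min d (min b (1 - b))"
  have "2 * (odds_weight' q b * (1 - b) + odds_weight q b - q * (C + 2 * odds q b)) / (1 - b)\<^sup>2 \<le> 0"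
  proof (rule local_max_imp_factor_deriv_nonpos)
    show "0 < d'" using \<open>0 < d\<close> b unfolding d'_def by simp
    fix t :: real assume t: "\<bar>t\<bar> < d'"
    then show "transfer_profile q b b C t \<le> transfer_profile q b b C 0"
      using max unfolding d'_def by simp
    show "(transfer_profile q b b C has_real_derivative
        (1 - (b + t)) powr q * (1 - (b - t)) powr q * transfer_slope q b b C t) (at t)"
      using t unfolding d'_def by (intro has_real_derivative_transfer_profile) auto
    show "0 < (1 - (b + t)) powr q * (1 - (b - t)) powr q"
      using t unfolding d'_def by auto
  next
    show "transfer_slope q b b C 0 = 0" by (simp add: transfer_slope_def)
  qed (rule has_real_derivative_transfer_slope_at_0[OF b])
  moreover have "(\<Sum>l<k. odds q (y l)) = C + 2 * odds q b"
    using assms unfolding C_def b_def by (simp add: sum.remove_pair)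
  ultimately show ?thesis using b unfolding b_def by (simp add: divide_le_0_iff)
qed

end

theorem lemma4p4:
  fixes k :: nat and q a b :: real and y :: "nat \<Rightarrow> real"
  assumes "k \<ge> 2"
    and "1/2 < q" and "q < 1"
    and "y \<in> simplex k"
    and "\<forall>i<k. y i > 0"
    and "\<forall>z\<in>simplex k. P k q z \<le> P k q y"
    and "\<exists>i<k. y i \<noteq> 1 / real k"
    and "a < 1 - q" and "1 - q < b"
    and "\<forall>i<k. y i = a \<or> y i = b"
    and "\<exists>i<k. y i = a" and "\<exists>i<k. y i = b"
  shows "card {i. i < k \<and> y i = b} = 1"
proof (rule ccontr)
  \<comment> \<open>Besides interior maximality, only 0 < q < 1 and a < b are used.\<close>
  interpret interior_maximizer k q y
    using assms(1-6) by unfold_locales auto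
  obtain i0 where i0: "i0 < k" "y i0 = a" using assms(11) by blast
  obtain i1 where i1: "i1 < k" "y i1 = b" using assms(12) by blast
  assume "card {i. i < k \<and> y i = b} \<noteq> 1"
  then have "{i. i < k \<and> y i = b} \<noteq> {i1}" by (metis is_singleton_altdef is_singletonI)
  then obtain i2 where i2: "i2 < k" "y i2 = b" "i2 \<noteq> i1" using i1 by blast
  have "a < b" using assms(8,9) by simp
  then have ab: "0 < a" "a < b" "b < 1" using pos coord_less_one i0 i1 by auto
  have "i1 \<noteq> i0" using i0 i1 \<open>a < b\<close> by auto
  from first_order_condition[OF i1(1) i0(1) this]
  have "q * (\<Sum>l<k. odds q (y l)) < odds_weight' q b * (1 - b) + odds_weight q b"
    using first_order_condition_violates_second_order[OF q ab] i0 i1 by simp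
  moreover have "odds_weight' q b * (1 - b) + odds_weight q b \<le> q * (\<Sum>l<k. odds q (y l))"
    using second_order_condition[OF i1(1) i2(1)] i1 i2 by simp
  ultimately show False by simp
qed

end
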